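(* Let $N\ge1$, $1\le m\le N$, $\alpha>0$, and $V$ a real symmetric positive definite $N\times N$ matrix. Let $A=\begin{pmatrix}0&E\\-V&-\alpha D\end{pmatrix}$ and $C_G=\frac1{2\alpha}\begin{pmatrix}V^{-1}&0\\0&E\end{pmatrix}$. For $z\in\mathbb{C}$ define $$\rho(z)=(V+z^2)^{-1},\quad \kappa(z)=\hat e^T\rho(z)\hat e,\quad \tau(z)=E^{(m)}+\alpha z\kappa(z),\quad T(z)=\alpha\hat e\,\tau(z)^{-1}\hat e^T,\quad \theta(z)=\rho(z)T(z)\rho(z).$$ Then, for every $z$ at which $A-z$, $V+z^2$ and $\tau(z)$ are invertible, $$(A-z)^{-1}C_G=\frac1{2\alpha}\begin{pmatrix}Q_{11}&Q_{12}\\Q_{21}&Q_{22}\end{pmatrix}$$ with $N\times N$ blocks $$Q_{11}=-z\rho(z)V^{-1}-\theta(z),\quad Q_{12}=-\rho(z)+z\theta(z),\quad Q_{21}=zQ_{11}+V^{-1},\quad Q_{22}=zQ_{12}.$$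
   Context: $E$ is the $N\times N$ identity, $E^{(m)}$ the $m\times m$ identity, $D$ the diagonal $N\times N$ matrix with $D_{k,k}=1$ for $k\in\{N-m+1,\dots,N\}$ and $0$ otherwise, and $\hat e$ the $N\times m$ matrix whose only nonzero entries are $\hat e_{N-m+i,i}=1$, $i=1,\dots,m$ (so $\kappa(z)$ is the restriction of $\rho(z)$ to indices $N-m+1,\dots,N$). *)

theory Defs
  imports Complex_Main "Jordan_Normal_Form.Matrix"
begin

definition mat_inv :: "'a :: semiring_1 mat \<Rightarrow> 'a mat" where
  "mat_inv M = (THE B. B \<in> carrier_mat (dim_row M) (dim_row M) \<and> inverts_mat M B \<and> inverts_mat B M)"

definition sym_pos_def :: "nat \<Rightarrow> real mat \<Rightarrow> bool" where
  "sym_pos_def n W \<longleftrightarrow> W \<in> carrier_mat n n \<and> transpose_mat W = W \<and>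
     (\<forall>x \<in> carrier_vec n. x \<noteq> 0\<^sub>v n \<longrightarrow> x \<bullet> (W *\<^sub>v x) > 0)"

definition Dmat :: "nat \<Rightarrow> nat \<Rightarrow> complex mat" where
  "Dmat N m = mat N N (\<lambda>(i,j). if i = j \<and> N - m \<le> i then 1 else 0)"

definition ehat :: "nat \<Rightarrow> nat \<Rightarrow> complex mat" where
  "ehat N m = mat N m (\<lambda>(i,j). if i = N - m + j then 1 else 0)"

definition Amat :: "nat \<Rightarrow> nat \<Rightarrow> real \<Rightarrow> complex mat \<Rightarrow> complex mat" where
  "Amat N m \<alpha> V = four_block_mat (0\<^sub>m N N) (1\<^sub>m N) (- V) (- (complex_of_real \<alpha> \<cdot>\<^sub>m Dmat N m))"

definition CG :: "nat \<Rightarrow> real \<Rightarrow> complex mat \<Rightarrow> complex mat" where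
  "CG N \<alpha> V = complex_of_real (1 / (2 * \<alpha>)) \<cdot>\<^sub>m
      four_block_mat (mat_inv V) (0\<^sub>m N N) (0\<^sub>m N N) (1\<^sub>m N)"

definition rho :: "nat \<Rightarrow> complex mat \<Rightarrow> complex \<Rightarrow> complex mat" where
  "rho N V z = mat_inv (V + (z^2) \<cdot>\<^sub>m 1\<^sub>m N)"

definition kappa :: "nat \<Rightarrow> nat \<Rightarrow> complex mat \<Rightarrow> complex \<Rightarrow> complex mat" where
  "kappa N m V z = transpose_mat (ehat N m) * rho N V z * ehat N m"

definition tau :: "nat \<Rightarrow> nat \<Rightarrow> real \<Rightarrow> complex mat \<Rightarrow> complex \<Rightarrow> complex mat" where
  "tau N m \<alpha> V z = 1\<^sub>m m + (complex_of_real \<alpha> * z) \<cdot>\<^sub>m kappa N m V z"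

definition Tmat :: "nat \<Rightarrow> nat \<Rightarrow> real \<Rightarrow> complex mat \<Rightarrow> complex \<Rightarrow> complex mat" where
  "Tmat N m \<alpha> V z = complex_of_real \<alpha> \<cdot>\<^sub>m (ehat N m * mat_inv (tau N m \<alpha> V z) * transpose_mat (ehat N m))"

definition theta :: "nat \<Rightarrow> nat \<Rightarrow> real \<Rightarrow> complex mat \<Rightarrow> complex \<Rightarrow> complex mat" where
  "theta N m \<alpha> V z = rho N V z * Tmat N m \<alpha> V z * rho N V z"

end

theory Submission
  imports Defs "Jordan_Normal_Form.Determinant"
begin

text \<open>
  Write \<open>A - z\<close> as a \<open>2\<times>2\<close> block matrix. Multiplying it by the claimed block matrix reduces
  the claim to two equations for \<open>K = V + z\<^sup>2 + \<alpha> z D\<close>, namely \<open>K Q\<^sub>1\<^sub>2 = -E\<close> and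
  \<open>K Q\<^sub>1\<^sub>1 = -(\<alpha> D + z) V\<^sup>-\<^sup>1\<close>. Since \<open>D = \<^bold>e \<^bold>e\<^sup>T\<close>, \<open>K\<close> is a rank-\<open>m\<close> update of
  \<open>V + z\<^sup>2\<close>, and the first equation is the Sherman-Morrison-Woodbury formula
  \<open>K\<^sup>-\<^sup>1 = \<rho> - \<alpha> z \<rho> \<^bold>e \<tau>\<^sup>-\<^sup>1 \<^bold>e\<^sup>T \<rho>\<close>; the second follows from \<open>K \<theta> = \<alpha> D \<rho>\<close> and
  \<open>\<rho> (V + z\<^sup>2) V\<^sup>-\<^sup>1 = V\<^sup>-\<^sup>1\<close>. Positivity of \<open>\<alpha>\<close> and of \<open>V\<close> is only used to make \<open>V\<close>
  invertible; the block identity itself holds over any commutative ring.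
\<close>

text \<open>
  Dimension-guarded ring laws for matrices: with the dimensions as simp facts, simp
  normalises a matrix polynomial into a sum of scaled products; any remaining reordering
  of summands is then done entrywise.
\<close>

lemma mult_mat_assoc_dim:
  "dim_col A = dim_row B \<Longrightarrow> dim_col B = dim_row C \<Longrightarrow> A * B * C = A * (B * C)"
  by (rule assoc_mult_mat[OF carrier_matI carrier_matI carrier_matI]) auto

lemma mult_add_distrib_mat_dim:
  "dim_col A = dim_row B \<Longrightarrow> dim_row C = dim_row B \<Longrightarrow> dim_col C = dim_col B \<Longrightarrow>
   A * (B + C) = A * B + A * C"
  by (rule mult_add_distrib_mat[OF carrier_matI carrier_matI carrier_matI]) auto

lemma add_mult_distrib_mat_dim:
  "dim_col A = dim_row C \<Longrightarrow> dim_row A = dim_row B \<Longrightarrow> dim_col A = dim_col B \<Longrightarrow>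
   (A + B) * C = A * C + B * C"
  by (rule add_mult_distrib_mat[OF carrier_matI carrier_matI carrier_matI]) auto

lemma mult_smult_assoc_mat_dim:
  "dim_col A = dim_row B \<Longrightarrow> (k \<cdot>\<^sub>m A) * B = (k::'a::comm_ring_1) \<cdot>\<^sub>m (A * B)"
  by (rule eq_matI) auto

lemma mult_smult_distrib_mat_dim:
  "dim_col A = dim_row B \<Longrightarrow> A * (k \<cdot>\<^sub>m B) = (k::'a::comm_ring_1) \<cdot>\<^sub>m (A * B)"
  by (rule eq_matI) auto

lemma smult_smult_mat: "k \<cdot>\<^sub>m (l \<cdot>\<^sub>m A) = ((k::'a::comm_ring_1) * l) \<cdot>\<^sub>m A"
  by (rule eq_matI) auto

lemma smult_add_distrib_mat_dim:
  "dim_row A = dim_row B \<Longrightarrow> dim_col A = dim_col B \<Longrightarrow>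
   k \<cdot>\<^sub>m (A + B) = (k::'a::comm_ring_1) \<cdot>\<^sub>m A + k \<cdot>\<^sub>m B"
  by (rule eq_matI) (auto simp: algebra_simps)

lemma uminus_mat_eq_smult: "- A = (-1::'a::comm_ring_1) \<cdot>\<^sub>m A"
  by (rule eq_matI) auto

lemma minus_mat_eq_add_smult_dim:
  "dim_row A = dim_row B \<Longrightarrow> dim_col A = dim_col B \<Longrightarrow> A - B = A + (-1::'a::comm_ring_1) \<cdot>\<^sub>m B"
  by (rule eq_matI) auto

lemmas mat_ring_normalise =
  mult_mat_assoc_dim mult_add_distrib_mat_dim add_mult_distrib_mat_dim
  mult_smult_assoc_mat_dim mult_smult_distrib_mat_dim smult_smult_mat smult_add_distrib_mat_dim
  uminus_mat_eq_smult minus_mat_eq_add_smult_dim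

lemma low_rank_push_through:
  fixes e \<rho> t :: "'a::comm_ring_1 mat" and c :: 'a
  assumes e: "e \<in> carrier_mat n m" and \<rho>: "\<rho> \<in> carrier_mat n n" and t: "t \<in> carrier_mat m m"
    and inv: "(1\<^sub>m m + c \<cdot>\<^sub>m (transpose_mat e * \<rho> * e)) * t = 1\<^sub>m m"
  shows "e * t * transpose_mat e + c \<cdot>\<^sub>m (e * transpose_mat e * \<rho> * (e * t * transpose_mat e))
       = e * transpose_mat e"
proof -
  have dims: "dim_row e = n" "dim_col e = m" "dim_row \<rho> = n" "dim_col \<rho> = n"
    "dim_row t = m" "dim_col t = m" using e \<rho> t by auto
  have "e * t * transpose_mat e + c \<cdot>\<^sub>m (e * transpose_mat e * \<rho> * (e * t * transpose_mat e))
      = e * ((1\<^sub>m m + c \<cdot>\<^sub>m (transpose_mat e * \<rho> * e)) * t) * transpose_mat e"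
    by (simp add: mat_ring_normalise dims)
  also have "\<dots> = e * transpose_mat e"
    using inv by (simp add: dims)
  finally show ?thesis .
qed

lemma low_rank_update_mult:
  fixes W \<rho> e t :: "'a::comm_ring_1 mat" and c :: 'a
  assumes W: "W \<in> carrier_mat n n" and \<rho>: "\<rho> \<in> carrier_mat n n"
    and e: "e \<in> carrier_mat n m" and t: "t \<in> carrier_mat m m"
    and W\<rho>: "W * \<rho> = 1\<^sub>m n"
    and inv: "(1\<^sub>m m + c \<cdot>\<^sub>m (transpose_mat e * \<rho> * e)) * t = 1\<^sub>m m"
  shows "(W + c \<cdot>\<^sub>m (e * transpose_mat e)) * (\<rho> * (e * t * transpose_mat e) * \<rho>)
       = e * transpose_mat e * \<rho>"
proof -
  have dims: "dim_row W = n" "dim_col W = n" "dim_row e = n" "dim_col e = m" "dim_row \<rho> = n"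
    "dim_col \<rho> = n" "dim_row t = m" "dim_col t = m" using W e \<rho> t by auto
  have "(W + c \<cdot>\<^sub>m (e * transpose_mat e)) * (\<rho> * (e * t * transpose_mat e) * \<rho>)
      = ((W * \<rho>) * (e * t * transpose_mat e)
         + c \<cdot>\<^sub>m (e * transpose_mat e * \<rho> * (e * t * transpose_mat e))) * \<rho>"
    by (simp add: mat_ring_normalise dims)
  also have "\<dots> = e * transpose_mat e * \<rho>"
    using low_rank_push_through[OF e \<rho> t inv] by (simp add: W\<rho> dims)
  finally show ?thesis .
qed

lemma woodbury_right_inverse:
  fixes W \<rho> e t :: "'a::comm_ring_1 mat" and c :: 'a
  assumes W: "W \<in> carrier_mat n n" and \<rho>: "\<rho> \<in> carrier_mat n n"
    and e: "e \<in> carrier_mat n m" and t: "t \<in> carrier_mat m m"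
    and W\<rho>: "W * \<rho> = 1\<^sub>m n"
    and inv: "(1\<^sub>m m + c \<cdot>\<^sub>m (transpose_mat e * \<rho> * e)) * t = 1\<^sub>m m"
  shows "(W + c \<cdot>\<^sub>m (e * transpose_mat e)) * (\<rho> - c \<cdot>\<^sub>m (\<rho> * (e * t * transpose_mat e) * \<rho>))
       = 1\<^sub>m n"
proof -
  have dims: "dim_row W = n" "dim_col W = n" "dim_row e = n" "dim_col e = m" "dim_row \<rho> = n"
    "dim_col \<rho> = n" "dim_row t = m" "dim_col t = m" using W e \<rho> t by auto
  have "(W + c \<cdot>\<^sub>m (e * transpose_mat e)) * (\<rho> - c \<cdot>\<^sub>m (\<rho> * (e * t * transpose_mat e) * \<rho>))
      = W * \<rho> + c \<cdot>\<^sub>m (e * transpose_mat e * \<rho>)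
        - c \<cdot>\<^sub>m ((W + c \<cdot>\<^sub>m (e * transpose_mat e)) * (\<rho> * (e * t * transpose_mat e) * \<rho>))"
    by (simp add: mat_ring_normalise dims)
  also have "\<dots> = 1\<^sub>m n"
    unfolding low_rank_update_mult[OF W \<rho> e t W\<rho> inv] W\<rho> by (rule eq_matI) (simp_all add: dims)
  finally show ?thesis .
qed

text \<open>The first block matrix is the companion linearisation of the quadratic pencil
  \<open>V + z\<^sup>2 + z B\<close>, so multiplying it out only involves the pencil itself.\<close>

lemma pencil_four_block_mult:
  fixes V B X R S :: "'a::comm_ring_1 mat" and z :: 'a
  assumes V: "V \<in> carrier_mat n n" and B: "B \<in> carrier_mat n n" and X: "X \<in> carrier_mat n n"
    and R: "R \<in> carrier_mat n n" and S: "S \<in> carrier_mat n n"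
    and KR: "(V + z^2 \<cdot>\<^sub>m 1\<^sub>m n + z \<cdot>\<^sub>m B) * R = - ((B + z \<cdot>\<^sub>m 1\<^sub>m n) * X)"
    and KS: "(V + z^2 \<cdot>\<^sub>m 1\<^sub>m n + z \<cdot>\<^sub>m B) * S = - 1\<^sub>m n"
  shows "four_block_mat (- (z \<cdot>\<^sub>m 1\<^sub>m n)) (1\<^sub>m n) (- V) (- B - z \<cdot>\<^sub>m 1\<^sub>m n)
       * four_block_mat R S (z \<cdot>\<^sub>m R + X) (z \<cdot>\<^sub>m S)
       = four_block_mat X (0\<^sub>m n n) (0\<^sub>m n n) (1\<^sub>m n)"
proof -
  have dims: "dim_row V = n" "dim_col V = n" "dim_row B = n" "dim_col B = n" "dim_row X = n"
    "dim_col X = n" "dim_row R = n" "dim_col R = n" "dim_row S = n" "dim_col S = n"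
    using V B X R S by auto
  let ?K = "V + z^2 \<cdot>\<^sub>m 1\<^sub>m n + z \<cdot>\<^sub>m B"
  have "- (z \<cdot>\<^sub>m 1\<^sub>m n) * R + 1\<^sub>m n * (z \<cdot>\<^sub>m R + X) = X"
    by (simp add: mat_ring_normalise dims) (rule eq_matI; simp add: dims)
  moreover have "- (z \<cdot>\<^sub>m 1\<^sub>m n) * S + 1\<^sub>m n * (z \<cdot>\<^sub>m S) = 0\<^sub>m n n"
    by (simp add: mat_ring_normalise dims) (rule eq_matI; simp add: dims)
  moreover have "- V * R + (- B - z \<cdot>\<^sub>m 1\<^sub>m n) * (z \<cdot>\<^sub>m R + X) = 0\<^sub>m n n"
  proof -
    have "- V * R + (- B - z \<cdot>\<^sub>m 1\<^sub>m n) * (z \<cdot>\<^sub>m R + X) = - (?K * R) - (B + z \<cdot>\<^sub>m 1\<^sub>m n) * X"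
      by (simp add: mat_ring_normalise dims power2_eq_square)
        (rule eq_matI; simp add: dims algebra_simps del: index_mult_mat(1))
    also have "\<dots> = 0\<^sub>m n n"
      unfolding KR by (rule eq_matI) (simp_all add: dims)
    finally show ?thesis .
  qed
  moreover have "- V * S + (- B - z \<cdot>\<^sub>m 1\<^sub>m n) * (z \<cdot>\<^sub>m S) = 1\<^sub>m n"
  proof -
    have "- V * S + (- B - z \<cdot>\<^sub>m 1\<^sub>m n) * (z \<cdot>\<^sub>m S) = - (?K * S)"
      by (simp add: mat_ring_normalise dims power2_eq_square)
        (rule eq_matI; simp add: dims algebra_simps del: index_mult_mat(1))
    then show ?thesis
      unfolding KS by (simp add: dims)
  qed
  ultimately show ?thesis
    using V B X R S by (subst mult_four_block_mat) auto
qed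

lemma pencil_resolvent_block_eqs:
  fixes V Vi \<rho> e t :: "'a::comm_ring_1 mat" and c z :: 'a
  assumes V: "V \<in> carrier_mat n n" and Vi: "Vi \<in> carrier_mat n n" and \<rho>: "\<rho> \<in> carrier_mat n n"
    and e: "e \<in> carrier_mat n m" and t: "t \<in> carrier_mat m m"
    and VVi: "V * Vi = 1\<^sub>m n"
    and W\<rho>: "(V + z^2 \<cdot>\<^sub>m 1\<^sub>m n) * \<rho> = 1\<^sub>m n" and \<rho>W: "\<rho> * (V + z^2 \<cdot>\<^sub>m 1\<^sub>m n) = 1\<^sub>m n"
    and inv: "(1\<^sub>m m + (c * z) \<cdot>\<^sub>m (transpose_mat e * \<rho> * e)) * t = 1\<^sub>m m"
    and \<theta>: "\<theta> = \<rho> * (c \<cdot>\<^sub>m (e * t * transpose_mat e)) * \<rho>"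
  defines "K \<equiv> V + z^2 \<cdot>\<^sub>m 1\<^sub>m n + z \<cdot>\<^sub>m (c \<cdot>\<^sub>m (e * transpose_mat e))"
  shows "K * (- \<rho> + z \<cdot>\<^sub>m \<theta>) = - 1\<^sub>m n"
    and "K * (- (z \<cdot>\<^sub>m (\<rho> * Vi)) - \<theta>) = - ((c \<cdot>\<^sub>m (e * transpose_mat e) + z \<cdot>\<^sub>m 1\<^sub>m n) * Vi)"
proof -
  define W where "W = V + z^2 \<cdot>\<^sub>m 1\<^sub>m n"
  define D where "D = e * transpose_mat e"
  define P where "P = e * t * transpose_mat e"
  have W: "W \<in> carrier_mat n n" using V by (simp add: W_def)
  have dims: "dim_row V = n" "dim_col V = n" "dim_row Vi = n" "dim_col Vi = n"
    "dim_row \<rho> = n" "dim_col \<rho> = n" "dim_row e = n" "dim_col e = m" "dim_row t = m" "dim_col t = m"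
    "dim_row W = n" "dim_col W = n"
    using V Vi \<rho> e t W by auto
  have K: "K = W + (c * z) \<cdot>\<^sub>m D"
    unfolding K_def W_def D_def by (rule eq_matI) (simp_all add: dims)
  note W\<rho> = W\<rho>[folded W_def] and \<rho>W = \<rho>W[folded W_def]
  have K\<rho>: "K * \<rho> = 1\<^sub>m n + (c * z) \<cdot>\<^sub>m (D * \<rho>)"
    unfolding K using W\<rho> by (simp add: mat_ring_normalise dims D_def)
  have K\<theta>: "K * \<theta> = c \<cdot>\<^sub>m (D * \<rho>)"
  proof -
    have "K * \<theta> = c \<cdot>\<^sub>m ((W + (c * z) \<cdot>\<^sub>m D) * (\<rho> * P * \<rho>))"
      unfolding K \<theta> P_def by (simp add: mat_ring_normalise dims D_def)
    then show ?thesis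
      using low_rank_update_mult[OF W \<rho> e t W\<rho> inv] by (simp add: D_def P_def)
  qed
  have DVi: "D * Vi = D * \<rho> + z^2 \<cdot>\<^sub>m (D * \<rho> * Vi)"
  proof -
    have "D * Vi = D * (\<rho> * W * Vi)" using \<rho>W by (simp add: dims D_def)
    also have "\<dots> = D * (\<rho> * (V * Vi)) + z^2 \<cdot>\<^sub>m (D * \<rho> * Vi)"
      by (simp add: mat_ring_normalise dims D_def W_def)
    finally show ?thesis by (simp add: VVi dims D_def)
  qed
  show "K * (- \<rho> + z \<cdot>\<^sub>m \<theta>) = - 1\<^sub>m n"
  proof -
    have "K * (- \<rho> + z \<cdot>\<^sub>m \<theta>) = - (K * (\<rho> - (c * z) \<cdot>\<^sub>m (\<rho> * P * \<rho>)))"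
      unfolding \<theta> P_def by (simp add: mat_ring_normalise dims K D_def mult_ac)
    then show ?thesis
      using woodbury_right_inverse[OF W \<rho> e t W\<rho> inv] by (simp add: K D_def P_def)
  qed
  show "K * (- (z \<cdot>\<^sub>m (\<rho> * Vi)) - \<theta>) = - ((c \<cdot>\<^sub>m (e * transpose_mat e) + z \<cdot>\<^sub>m 1\<^sub>m n) * Vi)"
  proof -
    have "K * (- (z \<cdot>\<^sub>m (\<rho> * Vi)) - \<theta>) = - (z \<cdot>\<^sub>m ((K * \<rho>) * Vi)) - K * \<theta>"
      unfolding K \<theta> by (simp add: mat_ring_normalise dims D_def)
    also have "\<dots> = - (c \<cdot>\<^sub>m (D * \<rho> + z^2 \<cdot>\<^sub>m (D * \<rho> * Vi)) + z \<cdot>\<^sub>m Vi)"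
      unfolding K\<rho> K\<theta> by (simp add: mat_ring_normalise dims D_def power2_eq_square)
        (rule eq_matI; simp add: dims D_def algebra_simps del: index_mult_mat(1))
    also have "\<dots> = - ((c \<cdot>\<^sub>m D + z \<cdot>\<^sub>m 1\<^sub>m n) * Vi)"
      unfolding DVi[symmetric] by (simp add: mat_ring_normalise dims D_def)
    finally show ?thesis by (simp add: D_def)
  qed
qed

lemma mat_inv_eqI:
  fixes A B :: "'a::field mat"
  assumes A: "A \<in> carrier_mat n n" and B: "B \<in> carrier_mat n n" and AB: "A * B = 1\<^sub>m n"
  shows "mat_inv A = B"
  unfolding mat_inv_def
proof (rule the_equality)
  show "B \<in> carrier_mat (dim_row A) (dim_row A) \<and> inverts_mat A B \<and> inverts_mat B A"
    using A B AB mat_mult_left_right_inverse[OF A B AB] by (auto simp: inverts_mat_def)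
next
  fix C assume "C \<in> carrier_mat (dim_row A) (dim_row A) \<and> inverts_mat A C \<and> inverts_mat C A"
  hence C: "C \<in> carrier_mat n n" and AC: "A * C = 1\<^sub>m n" using A by (auto simp: inverts_mat_def)
  have "C = (B * A) * C" using mat_mult_left_right_inverse[OF A B AB] C by simp
  also have "\<dots> = B * (A * C)" using A B C by simp
  finally show "C = B" using AC B by simp
qed

lemma invertible_mat_mat_inv:
  fixes A :: "'a::field mat"
  assumes "invertible_mat A" and A: "A \<in> carrier_mat n n"
  shows "mat_inv A \<in> carrier_mat n n" "A * mat_inv A = 1\<^sub>m n" "mat_inv A * A = 1\<^sub>m n"
proof -
  obtain B where AB: "A * B = 1\<^sub>m n" and BA: "B * A = 1\<^sub>m (dim_row B)"
    using assms unfolding invertible_mat_def inverts_mat_def by auto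
  have B: "B \<in> carrier_mat n n"
    using arg_cong[OF AB, of dim_col] arg_cong[OF BA, of dim_col] A by (intro carrier_matI) auto
  then show "mat_inv A \<in> carrier_mat n n" "A * mat_inv A = 1\<^sub>m n" "mat_inv A * A = 1\<^sub>m n"
    using mat_inv_eqI[OF A B AB] AB mat_mult_left_right_inverse[OF A B AB] by auto
qed

lemma mat_inv_mult_eqI:
  fixes M Q C :: "'a::field mat"
  assumes "invertible_mat M" and M: "M \<in> carrier_mat n n" and Q: "Q \<in> carrier_mat n k"
    and MQ: "M * Q = C"
  shows "mat_inv M * C = Q"
proof -
  note inv = invertible_mat_mat_inv[OF assms(1) M]
  have "mat_inv M * C = (mat_inv M * M) * Q" using inv(1) M Q by (simp add: MQ[symmetric])
  then show ?thesis using inv(3) Q by simp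
qed

lemma invertible_mat_if_det_nonzero:
  fixes A :: "'a::field mat"
  assumes A: "A \<in> carrier_mat n n" and "det A \<noteq> 0"
  shows "invertible_mat A"
proof -
  obtain B where "B \<in> carrier_mat n n" "A * B = 1\<^sub>m n" "B * A = 1\<^sub>m n"
    using det_non_zero_imp_unit[OF assms, of undefined] unfolding Units_def ring_mat_def by auto
  then show ?thesis using A unfolding invertible_mat_def inverts_mat_def by auto
qed

lemma sym_pos_def_det_nonzero:
  assumes "sym_pos_def n W"
  shows "det W \<noteq> 0"
proof
  have W: "W \<in> carrier_mat n n" using assms by (simp add: sym_pos_def_def)
  assume "det W = 0"
  then obtain v where v: "v \<in> carrier_vec n" "v \<noteq> 0\<^sub>v n" "W *\<^sub>v v = 0\<^sub>v n"
    using det_0_iff_vec_prod_zero[OF W] by auto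
  have "v \<bullet> (W *\<^sub>v v) > 0" using assms v(1,2) unfolding sym_pos_def_def by blast
  then show False using v by (simp add: scalar_prod_right_zero)
qed

lemma Dmat_eq_ehat_mult_transpose:
  assumes "m \<le> N"
  shows "Dmat N m = ehat N m * transpose_mat (ehat N m)"
proof (rule eq_matI)
  fix i j assume "i < dim_row (ehat N m * transpose_mat (ehat N m))"
    "j < dim_col (ehat N m * transpose_mat (ehat N m))"
  then have i: "i < N" and j: "j < N" by (auto simp: ehat_def)
  have "(ehat N m * transpose_mat (ehat N m)) $$ (i,j)
      = (\<Sum>k<m. (if i = N - m + k then 1 else 0) * (if j = N - m + k then 1 else 0 :: complex))"
    using i j by (simp add: ehat_def scalar_prod_def lessThan_atLeast0)
  also have "\<dots> = (\<Sum>k<m. if k = i - (N - m) then (if i = j \<and> N - m \<le> i then 1 else 0) else 0)"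
    using i j assms by (intro sum.cong) auto
  also have "\<dots> = Dmat N m $$ (i, j)"
    using i j assms by (auto simp: Dmat_def)
  finally show "Dmat N m $$ (i, j) = (ehat N m * transpose_mat (ehat N m)) $$ (i, j)" ..
qed (auto simp: Dmat_def ehat_def)

lemma Amat_minus_smult_one:
  assumes "V \<in> carrier_mat N N"
  shows "Amat N m \<alpha> V - z \<cdot>\<^sub>m 1\<^sub>m (2 * N)
       = four_block_mat (- (z \<cdot>\<^sub>m 1\<^sub>m N)) (1\<^sub>m N) (- V)
           (- (complex_of_real \<alpha> \<cdot>\<^sub>m Dmat N m) - z \<cdot>\<^sub>m 1\<^sub>m N)"
  using assms by (intro eq_matI) (auto simp: Amat_def Dmat_def)

lemma mat_inv_Amat_minus_smult_one_mult:
  assumes "m \<le> N" and V: "V \<in> carrier_mat N N" and "invertible_mat V"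
    and "invertible_mat (Amat N m \<alpha> V - z \<cdot>\<^sub>m 1\<^sub>m (2 * N))"
    and "invertible_mat (V + (z^2) \<cdot>\<^sub>m 1\<^sub>m N)" and "invertible_mat (tau N m \<alpha> V z)"
  defines "Q11 \<equiv> - (z \<cdot>\<^sub>m (rho N V z * mat_inv V)) - theta N m \<alpha> V z"
    and "Q12 \<equiv> - rho N V z + z \<cdot>\<^sub>m theta N m \<alpha> V z"
  shows "mat_inv (Amat N m \<alpha> V - z \<cdot>\<^sub>m 1\<^sub>m (2 * N))
           * four_block_mat (mat_inv V) (0\<^sub>m N N) (0\<^sub>m N N) (1\<^sub>m N)
       = four_block_mat Q11 Q12 (z \<cdot>\<^sub>m Q11 + mat_inv V) (z \<cdot>\<^sub>m Q12)"
proof -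
  note Vi = invertible_mat_mat_inv[OF assms(3) V]
  have "V + z^2 \<cdot>\<^sub>m 1\<^sub>m N \<in> carrier_mat N N" using V by simp
  note \<rho> = invertible_mat_mat_inv[OF assms(5) this, folded rho_def]
  have e: "ehat N m \<in> carrier_mat N m" by (simp add: ehat_def)
  have "tau N m \<alpha> V z \<in> carrier_mat m m" using e \<rho>(1) by (simp add: tau_def kappa_def)
  note t = invertible_mat_mat_inv[OF assms(6) this]
  have t_inv: "(1\<^sub>m m + (complex_of_real \<alpha> * z) \<cdot>\<^sub>m (transpose_mat (ehat N m) * rho N V z * ehat N m))
      * mat_inv (tau N m \<alpha> V z) = 1\<^sub>m m"
    using t(2) by (simp add: tau_def kappa_def)
  have \<theta>: "theta N m \<alpha> V z = rho N V z * (complex_of_real \<alpha> \<cdot>\<^sub>m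
      (ehat N m * mat_inv (tau N m \<alpha> V z) * transpose_mat (ehat N m))) * rho N V z"
    by (simp add: theta_def Tmat_def)
  note blocks = pencil_resolvent_block_eqs[OF V Vi(1) \<rho>(1) e t(1) Vi(2) \<rho>(2,3) t_inv \<theta>,
      folded Dmat_eq_ehat_mult_transpose[OF assms(1)]]
  have M: "Amat N m \<alpha> V - z \<cdot>\<^sub>m 1\<^sub>m (2 * N) \<in> carrier_mat (2 * N) (2 * N)"
    unfolding Amat_minus_smult_one[OF V] using V by (auto simp: mult_2 Dmat_def)
  have Q: "four_block_mat Q11 Q12 (z \<cdot>\<^sub>m Q11 + mat_inv V) (z \<cdot>\<^sub>m Q12) \<in> carrier_mat (2 * N) (2 * N)"
    using \<rho>(1) Vi(1) e t(1) by (auto simp: Q11_def Q12_def \<theta> mult_2)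
  have "(Amat N m \<alpha> V - z \<cdot>\<^sub>m 1\<^sub>m (2 * N))
      * four_block_mat Q11 Q12 (z \<cdot>\<^sub>m Q11 + mat_inv V) (z \<cdot>\<^sub>m Q12)
      = four_block_mat (mat_inv V) (0\<^sub>m N N) (0\<^sub>m N N) (1\<^sub>m N)"
    unfolding Amat_minus_smult_one[OF V] Q11_def Q12_def
    by (rule pencil_four_block_mult[OF V _ Vi(1) _ _ blocks(2) blocks(1)])
      (use \<rho>(1) Vi(1) e t(1) in \<open>auto simp: \<theta> Dmat_def\<close>)
  then show ?thesis by (rule mat_inv_mult_eqI[OF assms(4) M Q])
qed

theorem lemma5:
  fixes N m :: nat and \<alpha> :: real and Vr :: "real mat" and z :: complex
  assumes "1 \<le> N" and "1 \<le> m" and "m \<le> N" and "\<alpha> > 0"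
    and "sym_pos_def N Vr"
    and "V = map_mat complex_of_real Vr"
    and "invertible_mat (Amat N m \<alpha> V - z \<cdot>\<^sub>m 1\<^sub>m (2 * N))"
    and "invertible_mat (V + (z^2) \<cdot>\<^sub>m 1\<^sub>m N)"
    and "invertible_mat (tau N m \<alpha> V z)"
  shows "let Q11 = - (z \<cdot>\<^sub>m (rho N V z * mat_inv V)) - theta N m \<alpha> V z;
             Q12 = - rho N V z + z \<cdot>\<^sub>m theta N m \<alpha> V z;
             Q21 = z \<cdot>\<^sub>m Q11 + mat_inv V;
             Q22 = z \<cdot>\<^sub>m Q12
         in mat_inv (Amat N m \<alpha> V - z \<cdot>\<^sub>m 1\<^sub>m (2 * N)) * CG N \<alpha> V
            = complex_of_real (1 / (2 * \<alpha>)) \<cdot>\<^sub>m four_block_mat Q11 Q12 Q21 Q22"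
proof -
  have V: "V \<in> carrier_mat N N" using assms(5,6) by (auto simp: sym_pos_def_def)
  have "det V \<noteq> 0" using sym_pos_def_det_nonzero[OF assms(5)] assms(6) by simp
  then have "invertible_mat V" by (rule invertible_mat_if_det_nonzero[OF V])
  note resolvent = mat_inv_Amat_minus_smult_one_mult[OF assms(3) V this assms(7-9)]
  have "Amat N m \<alpha> V - z \<cdot>\<^sub>m 1\<^sub>m (2 * N) \<in> carrier_mat (2 * N) (2 * N)"
    unfolding Amat_minus_smult_one[OF V] using V by (auto simp: mult_2 Dmat_def)
  from invertible_mat_mat_inv(1)[OF assms(7) this]
  have "dim_col (mat_inv (Amat N m \<alpha> V - z \<cdot>\<^sub>m 1\<^sub>m (2 * N)))
      = dim_row (four_block_mat (mat_inv V) (0\<^sub>m N N) (0\<^sub>m N N) (1\<^sub>m N))"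
    using invertible_mat_mat_inv(1)[OF \<open>invertible_mat V\<close> V] by auto
  then show ?thesis
    unfolding Let_def CG_def resolvent[symmetric] by (simp add: mult_smult_distrib_mat_dim)
qed

end
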